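(* If a problem $\mathbf{f}$ is simple, then $X^{w}(\mathbf{f})=X^*(\mathbf{f})$.
   Context: A problem is a finite set $\mathbf{f}=\{f_1,\dots,f_m\}$ of functions $f_i:\mathbb{R}^n\to\mathbb{R}$ together with a feasible region $X\subseteq\mathbb{R}^n$, to be minimized simultaneously; its evaluation map is $x\mapsto(f_1(x),\dots,f_m(x))$. A subproblem $\mathbf{g}\subseteq\mathbf{f}$ is a subset of these functions (including the empty set and $\mathbf{f}$ itself), with the same $X$; its evaluation map is $x\mapsto(f_i(x))_{f_i\in\mathbf{g}}\in\mathbb{R}^{|\mathbf{g}|}$ (for $\mathbf{g}=\emptyset$ this is the map to the one-point space $\mathbb{R}^0$). For $x,y\in X$, $x$ $\mathbf{g}$-dominates $y$ if $f_i(x)\le f_i(y)$ for all $f_i\in\mathbf{g}$ and $f_j(x)<f_j(y)$ for some $f_j\in\mathbf{g}$. The Pareto set $X^*(\mathbf{g})$ is the set of $x^*\in X$ not $\mathbf{g}$-dominated by any $x\in X$; by convention $X^*(\emptyset)=\emptyset$. The weak Pareto set $X^w(\mathbf{g})$ is the set of $x\in X$ such that for every $y\in X$ there exists $f_i\in\mathbf{g}$ with $f_i(x)\le f_i(y)$. A problem $\mathbf{f}$ is simple if every subproblem $\mathbf{g}\subseteq\mathbf{f}$, say with $k=|\mathbf{g}|$ objectives, satisfies: (S1) $X^*(\mathbf{g})$ is homeomorphic to the standard simplex $\Delta^{k-1}=\{t\in[0,1]^k:\sum t_i=1\}$ (with $\Delta^{-1}=\emptyset$); (S2) the evaluation map of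 $\mathbf{g}$ restricted to $X^*(\mathbf{g})$ is a topological embedding into $\mathbb{R}^k$. All subsets of $\mathbb{R}^n$ and $\mathbb{R}^m$ carry the subspace topology of the Euclidean topology. *)

theory Defs
  imports "HOL-Analysis.Analysis"
begin

text \<open>A problem is a finite set fs of objective functions on R^n together with a
feasible region X.  A subproblem is a subset g of fs.\<close>

definition dominates :: "((real^'n) \<Rightarrow> real) set \<Rightarrow> real^'n \<Rightarrow> real^'n \<Rightarrow> bool" where
  "dominates g x y \<longleftrightarrow> (\<forall>f\<in>g. f x \<le> f y) \<and> (\<exists>f\<in>g. f x < f y)"

definition pareto_set :: "(real^'n) set \<Rightarrow> ((real^'n) \<Rightarrow> real) set \<Rightarrow> (real^'n) set" where
  "pareto_set X g = (if g = {} then {} else {x \<in> X. \<not> (\<exists>y\<in>X. dominates g y x)})"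

definition weak_pareto_set :: "(real^'n) set \<Rightarrow> ((real^'n) \<Rightarrow> real) set \<Rightarrow> (real^'n) set" where
  "weak_pareto_set X g = {x \<in> X. \<forall>y\<in>X. \<exists>f\<in>g. f x \<le> f y}"

text \<open>Evaluation map of subproblem g: x maps to the tuple (f x) indexed by f in g,
  viewed as an element of R^g (functions vanishing outside g, product topology).\<close>
definition eval_map :: "((real^'n) \<Rightarrow> real) set \<Rightarrow> real^'n \<Rightarrow> (((real^'n) \<Rightarrow> real) \<Rightarrow> real)" where
  "eval_map g x = (\<lambda>f. if f \<in> g then f x else 0)"

text \<open>Standard simplex Delta^(k-1) inside R^k (coordinates 0..k-1); empty for k = 0.\<close>
definition std_simplex :: "nat \<Rightarrow> (nat \<Rightarrow> real) set" where
  "std_simplex k = {t. (\<forall>i. k \<le> i \<longrightarrow> t i = 0) \<and> (\<forall>i<k. 0 \<le> t i) \<and> (\<Sum>i<k. t i) = 1}"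

definition simple_problem :: "(real^'n) set \<Rightarrow> ((real^'n) \<Rightarrow> real) set \<Rightarrow> bool" where
  "simple_problem X fs \<longleftrightarrow>
     (\<forall>g. g \<subseteq> fs \<longrightarrow>
        pareto_set X g homeomorphic std_simplex (card g) \<and>
        embedding_map (top_of_set (pareto_set X g)) euclidean (eval_map g))"

end

theory Submission
  imports Defs
begin

text \<open>Number the objectives \<open>f\<^sub>0, \<dots>, f\<^sub>m\<^sub>-\<^sub>1\<close> and let \<open>P\<^sub>J\<close> be the Pareto set of the subproblem
  \<open>{f\<^sub>i | i \<in> J}\<close>.  Simplicity makes each \<open>P\<^sub>J\<close> a topological \<open>(|J|-1)\<close>-simplex, and injectivity
  of the evaluation maps gives \<open>P\<^sub>J \<subseteq> P\<^sub>K\<close> for \<open>J \<subseteq> K\<close>.  Extending face by face (Tietze) yields a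
  continuous map \<open>\<Phi>\<close> from the standard simplex to the Pareto set sending the face spanned by \<open>J\<close>
  into \<open>P\<^sub>J\<close>.  If a weakly Pareto optimal \<open>x\<close> were not Pareto optimal, every point of \<open>P\<^sub>J\<close> would
  beat \<open>x\<close> in some objective of \<open>J\<close> by a uniform margin \<open>\<epsilon>\<close>, while weak optimality keeps the weights
  \<open>\<sigma>\<^sub>i(q) = max 0 (f\<^sub>i q - f\<^sub>i x + \<epsilon>)\<close> from vanishing simultaneously.  A Brouwer fixed point
  \<open>s = \<sigma>(\<Phi> s) / \<Sigma> \<sigma>(\<Phi> s)\<close> then has a coordinate \<open>i\<close> in its support with \<open>\<sigma>\<^sub>i(\<Phi> s) = 0\<close>,
  which is absurd.\<close>

section \<open>Pareto sets\<close>

lemma pareto_set_subset: "pareto_set X g \<subseteq> X"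
  by (auto simp: pareto_set_def)

lemma pareto_subset_weak_pareto: "pareto_set X g \<subseteq> weak_pareto_set X g"
proof
  fix x assume x: "x \<in> pareto_set X g"
  then have "g \<noteq> {}" and undominated: "\<And>y. y \<in> X \<Longrightarrow> \<not> dominates g y x"
    by (auto simp: pareto_set_def split: if_splits)
  then have "\<exists>f\<in>g. f x \<le> f y" if "y \<in> X" for y
    using that by (force simp: dominates_def not_le)
  then show "x \<in> weak_pareto_set X g"
    using x pareto_set_subset by (auto simp: weak_pareto_set_def)
qed

lemma pareto_set_weakly_below:
  assumes q: "q \<in> pareto_set X g" and y: "y \<in> X" and le: "\<forall>f\<in>g. f y \<le> f q"
  shows "y \<in> pareto_set X g" "eval_map g y = eval_map g q"
proof -
  have g: "g \<noteq> {}" and undominated: "\<And>z. z \<in> X \<Longrightarrow> \<not> dominates g z q"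
    using q by (auto simp: pareto_set_def split: if_splits)
  have eq: "\<forall>f\<in>g. f y = f q"
    using le undominated[OF y] by (force simp: dominates_def)
  then have "\<not> dominates g z y" if "z \<in> X" for z
    using undominated[OF that] unfolding dominates_def by metis
  then show "y \<in> pareto_set X g"
    using y g by (simp add: pareto_set_def)
  show "eval_map g y = eval_map g q"
    using eq by (auto simp: eval_map_def)
qed

lemma pareto_set_mono:
  assumes inj: "inj_on (eval_map g) (pareto_set X g)" and "g \<subseteq> h"
  shows "pareto_set X g \<subseteq> pareto_set X h"
proof
  fix q assume q: "q \<in> pareto_set X g"
  then have "h \<noteq> {}" using \<open>g \<subseteq> h\<close> by (auto simp: pareto_set_def split: if_splits)
  have "\<not> dominates h y q" if y: "y \<in> X" for y
  proof
    assume dom: "dominates h y q"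
    then have "\<forall>f\<in>g. f y \<le> f q" using \<open>g \<subseteq> h\<close> by (auto simp: dominates_def)
    then have "y = q"
      using pareto_set_weakly_below[OF q y] inj q by (meson inj_onD)
    then show False using dom by (auto simp: dominates_def)
  qed
  then show "q \<in> pareto_set X h"
    using q \<open>h \<noteq> {}\<close> pareto_set_subset by (auto simp: pareto_set_def)
qed

lemma simple_problem_homeomorphic:
  "simple_problem X fs \<Longrightarrow> g \<subseteq> fs \<Longrightarrow> pareto_set X g homeomorphic std_simplex (card g)"
  by (simp add: simple_problem_def)

lemma embedding_map_imp_inj_continuous:
  assumes "embedding_map (top_of_set S) euclidean f"
  shows "inj_on f S" "continuous_on S f"
proof -
  have hom: "homeomorphic_map (top_of_set S) (subtopology euclidean (f ` S)) f"
    using assms by (simp add: embedding_map_def)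
  show "inj_on f S"
    using homeomorphic_imp_injective_map[OF hom] by simp
  show "continuous_on S f"
    using homeomorphic_imp_continuous_map[OF hom] continuous_map_in_subtopology by auto
qed

lemma simple_problem_inj_on_eval_map:
  "simple_problem X fs \<Longrightarrow> g \<subseteq> fs \<Longrightarrow> inj_on (eval_map g) (pareto_set X g)"
  by (simp add: simple_problem_def embedding_map_imp_inj_continuous)

lemma simple_problem_continuous_on:
  assumes "simple_problem X fs" "g \<subseteq> fs" "f \<in> g"
  shows "continuous_on (pareto_set X g) f"
proof -
  have "continuous_on (pareto_set X g) (eval_map g)"
    using assms by (simp add: simple_problem_def embedding_map_imp_inj_continuous)
  then have "continuous_on (pareto_set X g) (\<lambda>x. eval_map g x f)"
    by (rule continuous_on_product_then_coordinatewise)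
  then show ?thesis
    using \<open>f \<in> g\<close> by (simp add: eval_map_def)
qed

section \<open>The standard simplex\<close>

lemma std_simplex_coordinate:
  assumes "t \<in> std_simplex k"
  shows "t i \<in> {0..1}"
proof (cases "i < k")
  case True
  have "t i \<le> (\<Sum>j<k. t j)"
    using assms True by (intro member_le_sum) (auto simp: std_simplex_def)
  then show ?thesis using assms True by (auto simp: std_simplex_def)
qed (use assms in \<open>auto simp: std_simplex_def\<close>)

lemma compact_std_simplex: "compact (std_simplex k)"
proof -
  have cube: "compact (PiE UNIV (\<lambda>i::nat. {0..1::real}))"
    using compactin_PiE[of "\<lambda>i. euclidean" UNIV "\<lambda>i. {0..1::real}"]
    by (simp add: euclidean_product_topology compactin_euclidean_iff)
  have "std_simplex k = (\<Inter>i. {t. k \<le> i \<longrightarrow> t i = 0}) \<inter> (\<Inter>i. {t. i < k \<longrightarrow> 0 \<le> t i})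
      \<inter> {t. (\<Sum>i<k. t i) = 1}"
    by (auto simp: std_simplex_def)
  moreover have "closed {t::nat\<Rightarrow>real. k \<le> i \<longrightarrow> t i = 0}" for i
    by (cases "k \<le> i") (auto intro!: closed_Collect_eq continuous_on_product_coordinates)
  moreover have "closed {t::nat\<Rightarrow>real. i < k \<longrightarrow> 0 \<le> t i}" for i
    by (cases "i < k") (auto intro!: closed_Collect_le continuous_on_product_coordinates)
  moreover have "closed {t::nat\<Rightarrow>real. (\<Sum>i<k. t i) = 1}"
    by (intro closed_Collect_eq continuous_intros continuous_on_product_coordinates)
  ultimately have "closed (std_simplex k)"
    by (auto intro!: closed_Int closed_INT)
  moreover have "std_simplex k \<subseteq> PiE UNIV (\<lambda>i::nat. {0..1::real})"
    using std_simplex_coordinate by auto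
  ultimately show ?thesis
    using cube by (metis compact_Int_closed inf.absorb_iff2)
qed

definition normalize_weights :: "nat \<Rightarrow> (nat \<Rightarrow> real) \<Rightarrow> nat \<Rightarrow> real" where
  "normalize_weights k w = (\<lambda>i. if i < k then w i / (\<Sum>j<k. w j) else 0)"

lemma normalize_weights_in_std_simplex:
  assumes "\<And>i. i < k \<Longrightarrow> 0 \<le> w i" and "0 < (\<Sum>j<k. w j)"
  shows "normalize_weights k w \<in> std_simplex k"
proof -
  have "(\<Sum>i<k. normalize_weights k w i) = 1"
    using assms(2) by (simp add: normalize_weights_def flip: sum_divide_distrib)
  then show ?thesis
    using assms by (auto simp: std_simplex_def normalize_weights_def)
qed

lemma normalize_weights_std_simplex:
  assumes "t \<in> std_simplex k" and "\<And>i. i < k \<Longrightarrow> w i = t i"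
  shows "normalize_weights k w = t"
  using assms by (auto simp: std_simplex_def normalize_weights_def)

lemma continuous_on_normalize_weights:
  assumes "\<And>i. i < k \<Longrightarrow> continuous_on U (\<lambda>x. w x i)"
    and "\<And>x. x \<in> U \<Longrightarrow> (\<Sum>j<k. w x j) \<noteq> 0"
  shows "continuous_on U (\<lambda>x. normalize_weights k (w x))"
proof (rule continuous_on_coordinatewise_then_product)
  fix i
  show "continuous_on U (\<lambda>x. normalize_weights k (w x) i)"
  proof (cases "i < k")
    case True
    have "continuous_on U (\<lambda>x. w x i / (\<Sum>j<k. w x j))"
      using assms True by (intro continuous_on_divide continuous_on_sum) auto
    then show ?thesis
      using True by (simp add: normalize_weights_def)
  qed (simp add: normalize_weights_def)
qed

lemma Tietze_coordinatewise_unit_interval: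
  fixes \<psi> :: "'a::{metric_space,second_countable_topology} \<Rightarrow> 'i \<Rightarrow> real"
  assumes cont: "continuous_on S \<psi>" and S: "closedin (top_of_set U) S"
    and into: "\<And>x i. x \<in> S \<Longrightarrow> \<psi> x i \<in> {0..1}"
  obtains E where "\<And>i. continuous_on U (E i)" "\<And>i x. x \<in> S \<Longrightarrow> E i x = \<psi> x i"
    "\<And>i x. x \<in> U \<Longrightarrow> E i x \<in> {0..1}"
proof -
  have "\<exists>g. continuous_on U g \<and> (\<forall>x\<in>S. g x = \<psi> x i) \<and> (\<forall>x\<in>U. g x \<in> {0..1})" for i
  proof -
    have "continuous_on S (\<lambda>x. \<psi> x i)"
      using cont by (rule continuous_on_product_then_coordinatewise)
    then obtain g where "continuous_on U g" "\<And>x. x \<in> S \<Longrightarrow> g x = \<psi> x i"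
        "\<And>x. x \<in> U \<Longrightarrow> g x \<in> cbox 0 1"
      using Tietze_closed_interval_1[OF _ S, of "\<lambda>x. \<psi> x i" 0 1] into by auto
    then show ?thesis by auto
  qed
  then show ?thesis
    using that by metis
qed

text \<open>The normalisation repairs the points where the Tietze extensions of the coordinates sum to
  less than one, and it fixes the points of the simplex.\<close>
lemma std_simplex_extension:
  fixes \<psi> :: "'a::{metric_space,second_countable_topology} \<Rightarrow> nat \<Rightarrow> real"
  assumes k: "k \<ge> 1" and S: "closedin (top_of_set U) S"
    and cont: "continuous_on S \<psi>" and into: "\<psi> ` S \<subseteq> std_simplex k"
  obtains \<psi>' where "continuous_on U \<psi>'" "\<psi>' ` U \<subseteq> std_simplex k" "\<And>x. x \<in> S \<Longrightarrow> \<psi>' x = \<psi> x"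
proof -
  have "\<psi> x i \<in> {0..1}" if "x \<in> S" for x i
    using std_simplex_coordinate[of "\<psi> x"] into that by auto
  from Tietze_coordinatewise_unit_interval[OF cont S this]
  obtain E where E: "\<And>i. continuous_on U (E i)" "\<And>i x. x \<in> S \<Longrightarrow> E i x = \<psi> x i"
      "\<And>i x. x \<in> U \<Longrightarrow> E i x \<in> {0..1}"
    by blast
  define w where "w x i = E i x + max 0 (1 - (\<Sum>j<k. E j x))" for x i
  have sum_w: "(\<Sum>i<k. w x i) \<ge> 1" if "x \<in> U" for x
  proof -
    have "(\<Sum>i<k. w x i) = (\<Sum>j<k. E j x) + real k * max 0 (1 - (\<Sum>j<k. E j x))"
      by (simp add: w_def sum.distrib)
    moreover have "real k * max 0 (1 - (\<Sum>j<k. E j x)) \<ge> max 0 (1 - (\<Sum>j<k. E j x))"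
      using k by (simp add: mult_le_cancel_right1)
    ultimately show ?thesis by linarith
  qed
  show ?thesis
  proof (rule that[of "\<lambda>x. normalize_weights k (w x)"])
    have "continuous_on U (\<lambda>x. w x i)" for i
      unfolding w_def by (intro continuous_intros E(1))
    moreover have "(\<Sum>j<k. w x j) \<noteq> 0" if "x \<in> U" for x
      using sum_w[OF that] by linarith
    ultimately show "continuous_on U (\<lambda>x. normalize_weights k (w x))"
      by (rule continuous_on_normalize_weights)
    have "normalize_weights k (w x) \<in> std_simplex k" if "x \<in> U" for x
      using sum_w[OF that] E(3)[OF that] by (intro normalize_weights_in_std_simplex) (auto simp: w_def)
    then show "(\<lambda>x. normalize_weights k (w x)) ` U \<subseteq> std_simplex k"
      by blast
    fix x assume "x \<in> S"
    then have "\<psi> x \<in> std_simplex k" using into by blast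
    moreover from this have "w x i = \<psi> x i" for i
      using E(2)[OF \<open>x \<in> S\<close>] by (simp add: w_def std_simplex_def)
    ultimately show "normalize_weights k (w x) = \<psi> x"
      by (simp add: normalize_weights_std_simplex)
  qed
qed

lemma homeomorphic_std_simplex_extension:
  fixes \<psi> :: "'a::{metric_space,second_countable_topology} \<Rightarrow> 'b::topological_space"
  assumes Q: "Q homeomorphic std_simplex k" and k: "k \<ge> 1" and S: "closedin (top_of_set U) S"
    and cont: "continuous_on S \<psi>" and into: "\<psi> ` S \<subseteq> Q"
  obtains \<psi>' where "continuous_on U \<psi>'" "\<psi>' ` U \<subseteq> Q" "\<And>x. x \<in> S \<Longrightarrow> \<psi>' x = \<psi> x"
proof -
  obtain H H' where hom: "homeomorphism Q (std_simplex k) H H'"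
    using Q by (auto simp: homeomorphic_def)
  then have "continuous_on S (\<lambda>x. H (\<psi> x))" "(\<lambda>x. H (\<psi> x)) ` S \<subseteq> std_simplex k"
    using continuous_on_compose2[OF _ cont into] into by (auto simp: homeomorphism_def)
  then obtain V where V: "continuous_on U V" "V ` U \<subseteq> std_simplex k" "\<And>x. x \<in> S \<Longrightarrow> V x = H (\<psi> x)"
    using std_simplex_extension[OF k S] by blast
  show ?thesis
  proof (rule that[of "H' \<circ> V"])
    show "continuous_on U (H' \<circ> V)"
      using continuous_on_compose2[OF _ V(1,2)] hom by (auto simp: homeomorphism_def o_def)
    show "(H' \<circ> V) ` U \<subseteq> Q"
      using V hom by (auto simp: homeomorphism_def)
    show "(H' \<circ> V) x = \<psi> x" if "x \<in> S" for x
      using V(3)[OF that] that into hom by (auto simp: homeomorphism_def)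
  qed
qed

text \<open>The type \<open>nat \<Rightarrow> real\<close> is not a Euclidean space, so Brouwer's theorem is transported
  from a homeomorphic copy \<open>P\<close> of the simplex, which is a retract of a ball.\<close>
lemma std_simplex_fixpoint:
  fixes P :: "'a::euclidean_space set"
  assumes hom: "P homeomorphic std_simplex m" and m: "m \<ge> 1"
    and cont: "continuous_on (std_simplex m) F" and into: "F ` std_simplex m \<subseteq> std_simplex m"
  obtains t where "t \<in> std_simplex m" "F t = t"
proof -
  have "compact P"
    by (simp add: homeomorphic_compactness[OF hom] compact_std_simplex)
  then obtain R where R: "R > 0" "P \<subseteq> cball 0 R"
    by (meson bounded_subset_ballD compact_imp_bounded ball_subset_cball order_trans)
  have closed_P: "closedin (top_of_set (cball 0 R)) P"
    using R(2) \<open>compact P\<close> by (simp add: closed_subset compact_imp_closed)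
  obtain r where r: "continuous_on (cball 0 R) r" "r ` cball 0 R \<subseteq> P" "\<And>x. x \<in> P \<Longrightarrow> r x = x"
    using homeomorphic_std_simplex_extension[OF hom m closed_P continuous_on_id]
    by (metis image_ident order_refl)
  have retract: "P retract_of cball 0 R"
    unfolding retract_of_def retraction_def using r R(2) by (auto simp: Pi_iff)
  have "\<exists>y\<in>P. g y = y" if "continuous_on P g" "g \<in> P \<rightarrow> P" for g
  proof -
    have "\<exists>x\<in>cball 0 R. f x = x"
      if "continuous_on (cball 0 R) f" "f \<in> cball 0 R \<rightarrow> cball 0 R" for f :: "'a \<Rightarrow> 'a"
      using brouwer_ball[OF R(1) that] by blast
    then show ?thesis
      using retract_fixpoint_property[OF retract _ that] by metis
  qed
  then have "\<forall>g. continuous_on (std_simplex m) g \<and> g \<in> std_simplex m \<rightarrow> std_simplex m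
      \<longrightarrow> (\<exists>t\<in>std_simplex m. g t = t)"
    using homeomorphic_fixpoint_property[OF hom] by blast
  then show ?thesis
    using that cont into by (auto simp: image_subset_iff_funcset)
qed

section \<open>Maps carried by a family of simplices\<close>

definition face :: "nat \<Rightarrow> nat set \<Rightarrow> (nat \<Rightarrow> real) set" where
  "face m J = {t \<in> std_simplex m. \<forall>i. i \<notin> J \<longrightarrow> t i = 0}"

definition nonzero_coords :: "(nat \<Rightarrow> real) \<Rightarrow> nat set" where
  "nonzero_coords t = {i. t i \<noteq> 0}"

lemma closed_face: "closed (face m J)"
proof -
  have "face m J = std_simplex m \<inter> (\<Inter>i. {t. i \<notin> J \<longrightarrow> t i = 0})"
    by (auto simp: face_def)
  moreover have "closed {t::nat\<Rightarrow>real. i \<notin> J \<longrightarrow> t i = 0}" for i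
    by (cases "i \<in> J") (auto intro!: closed_Collect_eq continuous_on_product_coordinates)
  ultimately show ?thesis
    by (simp add: closed_Int closed_INT compact_imp_closed[OF compact_std_simplex])
qed

lemma face_empty [simp]: "face m {} = {}"
  by (auto simp: face_def std_simplex_def)

lemma face_lessThan: "face m {..<m} = std_simplex m"
  by (auto simp: face_def std_simplex_def)

lemma nonzero_coords_subset_face: "t \<in> face m J \<Longrightarrow> nonzero_coords t \<subseteq> J"
  by (auto simp: face_def nonzero_coords_def)

lemma std_simplex_nonzero_coords:
  assumes t: "t \<in> std_simplex m"
  shows "t \<in> face m (nonzero_coords t)" "nonzero_coords t \<subseteq> {..<m}" "nonzero_coords t \<noteq> {}"
proof -
  show "t \<in> face m (nonzero_coords t)" "nonzero_coords t \<subseteq> {..<m}"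
    using t by (auto simp: face_def nonzero_coords_def std_simplex_def not_le)
  show "nonzero_coords t \<noteq> {}"
  proof
    assume "nonzero_coords t = {}"
    then have "(\<Sum>i<m. t i) = 0" by (simp add: nonzero_coords_def)
    then show False using t by (simp add: std_simplex_def)
  qed
qed

lemma face_boundary: "{t \<in> face m J. \<exists>i\<in>J. t i = 0} = (\<Union>i\<in>J. face m (J - {i}))"
  by (auto simp: face_def)

text \<open>A map on the \<open>(k-1)\<close>-skeleton of \<open>\<Delta>\<^sup>m\<^sup>-\<^sup>1\<close> carried by \<open>P\<close>; it is defined everywhere,
  but only its restrictions to the faces matter.\<close>
definition carried_map :: "nat \<Rightarrow> nat \<Rightarrow> (nat set \<Rightarrow> 'a::topological_space set) \<Rightarrow> ((nat \<Rightarrow> real) \<Rightarrow> 'a) \<Rightarrow> bool" where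
  "carried_map m k P \<Phi> \<longleftrightarrow>
     (\<forall>J. J \<subseteq> {..<m} \<and> J \<noteq> {} \<and> card J \<le> k \<longrightarrow> continuous_on (face m J) \<Phi> \<and> \<Phi> ` face m J \<subseteq> P J)"

lemma carried_mapD:
  "carried_map m k P \<Phi> \<Longrightarrow> J \<subseteq> {..<m} \<Longrightarrow> J \<noteq> {} \<Longrightarrow> card J \<le> k
    \<Longrightarrow> continuous_on (face m J) \<Phi> \<and> \<Phi> ` face m J \<subseteq> P J"
  by (simp add: carried_map_def)

text \<open>Extensions over the faces with \<open>k + 1\<close> vertices that agree with \<open>\<Phi>\<close> on their boundaries
  glue, because every point lies in the relative interior of the face of its support.\<close>
lemma carried_map_glue:
  assumes \<Phi>: "carried_map m k P \<Phi>"
    and \<Psi>: "\<And>J. J \<subseteq> {..<m} \<Longrightarrow> card J = Suc k \<Longrightarrow>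
      continuous_on (face m J) (\<Psi> J) \<and> \<Psi> J ` face m J \<subseteq> P J
      \<and> (\<forall>t\<in>face m J. (\<exists>i\<in>J. t i = 0) \<longrightarrow> \<Psi> J t = \<Phi> t)"
  shows "carried_map m (Suc k) P
    (\<lambda>t. if card (nonzero_coords t) = Suc k then \<Psi> (nonzero_coords t) t else \<Phi> t)"
proof -
  define \<Phi>' where "\<Phi>' = (\<lambda>t. if card (nonzero_coords t) = Suc k then \<Psi> (nonzero_coords t) t else \<Phi> t)"
  have "continuous_on (face m J) \<Phi>' \<and> \<Phi>' ` face m J \<subseteq> P J"
    if J: "J \<subseteq> {..<m}" "J \<noteq> {}" "card J \<le> Suc k" for J
  proof -
    have fin: "finite J"
      using J(1) by (rule finite_subset) simp
    have card_le: "card (nonzero_coords t) \<le> card J" if "t \<in> face m J" for t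
      using fin nonzero_coords_subset_face[OF that] by (rule card_mono)
    consider "card J \<le> k" | "card J = Suc k" using J(3) by linarith
    then show ?thesis
    proof cases
      case 1
      have eq: "\<Phi> t = \<Phi>' t" if "t \<in> face m J" for t
        using card_le[OF that] 1 by (simp add: \<Phi>'_def)
      have "continuous_on (face m J) \<Phi> \<and> \<Phi> ` face m J \<subseteq> P J"
        using carried_mapD[OF \<Phi> J(1,2) 1] .
      then show ?thesis
        using continuous_on_eq[OF _ eq, of "face m J"] image_cong[OF refl eq, of "face m J"] by simp
    next
      case 2
      have eq: "\<Psi> J t = \<Phi>' t" if t: "t \<in> face m J" for t
      proof (cases "card (nonzero_coords t) = Suc k")
        case True
        then have "nonzero_coords t = J"
          using card_subset_eq[OF fin nonzero_coords_subset_face[OF t]] 2 by simp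
        then show ?thesis using True by (simp add: \<Phi>'_def)
      next
        case False
        then have "nonzero_coords t \<noteq> J" using 2 by auto
        then obtain i where "i \<in> J" "i \<notin> nonzero_coords t"
          using nonzero_coords_subset_face[OF t] by blast
        then have "t i = 0"
          by (simp add: nonzero_coords_def)
        moreover have "(\<exists>i\<in>J. t i = 0) \<longrightarrow> \<Psi> J t = \<Phi> t"
          using conjunct2[OF conjunct2[OF \<Psi>[OF J(1) 2]]] t by (rule bspec)
        ultimately have "\<Psi> J t = \<Phi> t"
          using \<open>i \<in> J\<close> by blast
        then show ?thesis
          using False by (simp add: \<Phi>'_def)
      qed
      then show ?thesis
        using \<Psi>[OF J(1) 2] continuous_on_eq[OF _ eq, of "face m J"] image_cong[OF refl eq, of "face m J"]
        by simp
    qed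
  qed
  then have "carried_map m (Suc k) P \<Phi>'"
    by (simp add: carried_map_def)
  then show ?thesis
    by (simp only: \<Phi>'_def)
qed

locale simplex_family =
  fixes m :: nat and P :: "nat set \<Rightarrow> 'a::euclidean_space set"
  assumes homeomorphic: "J \<subseteq> {..<m} \<Longrightarrow> J \<noteq> {} \<Longrightarrow> P J homeomorphic std_simplex (card J)"
    and mono: "J \<subseteq> K \<Longrightarrow> K \<subseteq> {..<m} \<Longrightarrow> P J \<subseteq> P K"
begin

lemma extend_over_face:
  assumes \<Phi>: "carried_map m k P \<Phi>" and J: "J \<subseteq> {..<m}" "card J = Suc k"
  obtains \<Psi> where "continuous_on (face m J) \<Psi>" "\<Psi> ` face m J \<subseteq> P J"
    "\<And>t. t \<in> face m J \<Longrightarrow> \<exists>i\<in>J. t i = 0 \<Longrightarrow> \<Psi> t = \<Phi> t"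
proof -
  have fin: "finite J"
    using J(1) by (rule finite_subset) simp
  have "J \<noteq> {}"
    using J(2) by auto
  have facet: "continuous_on (face m (J - {i})) \<Phi> \<and> \<Phi> ` face m (J - {i}) \<subseteq> P J" if "i \<in> J" for i
  proof (cases "J - {i} = {}")
    case True
    then show ?thesis by (simp only: face_empty) simp
  next
    case False
    have "card (J - {i}) = k"
      using J(2) that fin by simp
    then have "continuous_on (face m (J - {i})) \<Phi> \<and> \<Phi> ` face m (J - {i}) \<subseteq> P (J - {i})"
      using carried_mapD[OF \<Phi> _ False] J(1) by blast
    then show ?thesis
      using mono[of "J - {i}" J] J(1) by blast
  qed
  define B where "B = (\<Union>i\<in>J. face m (J - {i}))"
  have cont: "continuous_on B \<Phi>"
    unfolding B_def
  proof (rule continuous_on_closed_Union[OF fin])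
    show "closed (face m (J - {i}))" for i by (rule closed_face)
    show "continuous_on (face m (J - {i})) \<Phi>" if "i \<in> J" for i
      using facet[OF that] ..
  qed
  have into: "\<Phi> ` B \<subseteq> P J"
    unfolding B_def using facet by blast
  have B: "B = {t \<in> face m J. \<exists>i\<in>J. t i = 0}"
    unfolding B_def by (rule face_boundary[symmetric])
  have "closed B"
    unfolding B_def by (rule closed_UN[OF fin]) (simp add: closed_face)
  then have closed: "closedin (top_of_set (face m J)) B"
    by (rule closed_subset[rotated]) (simp add: B)
  have "1 \<le> card J" using J(2) by simp
  from homeomorphic_std_simplex_extension[OF homeomorphic[OF J(1) \<open>J \<noteq> {}\<close>] this closed cont into]
  obtain \<Psi> where \<Psi>: "continuous_on (face m J) \<Psi>" "\<Psi> ` face m J \<subseteq> P J" "\<And>t. t \<in> B \<Longrightarrow> \<Psi> t = \<Phi> t"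
    by blast
  show ?thesis
  proof (rule that[OF \<Psi>(1,2)])
    show "\<Psi> t = \<Phi> t" if "t \<in> face m J" "\<exists>i\<in>J. t i = 0" for t
      using \<Psi>(3) that by (simp add: B)
  qed
qed

lemma carried_map_Suc:
  assumes \<Phi>: "carried_map m k P \<Phi>"
  obtains \<Phi>' where "carried_map m (Suc k) P \<Phi>'"
proof -
  have "\<forall>J. \<exists>\<Psi>. J \<subseteq> {..<m} \<and> card J = Suc k \<longrightarrow> continuous_on (face m J) \<Psi> \<and> \<Psi> ` face m J \<subseteq> P J
      \<and> (\<forall>t\<in>face m J. (\<exists>i\<in>J. t i = 0) \<longrightarrow> \<Psi> t = \<Phi> t)"
  proof
    fix J
    show "\<exists>\<Psi>. J \<subseteq> {..<m} \<and> card J = Suc k \<longrightarrow> continuous_on (face m J) \<Psi> \<and> \<Psi> ` face m J \<subseteq> P J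
      \<and> (\<forall>t\<in>face m J. (\<exists>i\<in>J. t i = 0) \<longrightarrow> \<Psi> t = \<Phi> t)"
    proof (cases "J \<subseteq> {..<m} \<and> card J = Suc k")
      case True
      then obtain \<Psi> where "continuous_on (face m J) \<Psi>" "\<Psi> ` face m J \<subseteq> P J"
          "\<And>t. t \<in> face m J \<Longrightarrow> \<exists>i\<in>J. t i = 0 \<Longrightarrow> \<Psi> t = \<Phi> t"
        using extend_over_face[OF \<Phi>] by blast
      then show ?thesis by blast
    qed blast
  qed
  from choice[OF this] obtain \<Psi> where "\<forall>J. J \<subseteq> {..<m} \<and> card J = Suc k \<longrightarrow>
      continuous_on (face m J) (\<Psi> J) \<and> \<Psi> J ` face m J \<subseteq> P J
      \<and> (\<forall>t\<in>face m J. (\<exists>i\<in>J. t i = 0) \<longrightarrow> \<Psi> J t = \<Phi> t)"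
    by blast
  then have \<Psi>: "\<And>J. J \<subseteq> {..<m} \<Longrightarrow> card J = Suc k \<Longrightarrow>
      continuous_on (face m J) (\<Psi> J) \<and> \<Psi> J ` face m J \<subseteq> P J
      \<and> (\<forall>t\<in>face m J. (\<exists>i\<in>J. t i = 0) \<longrightarrow> \<Psi> J t = \<Phi> t)"
    by blast
  show ?thesis
    using carried_map_glue[OF \<Phi> \<Psi>] by (rule that)
qed

lemma ex_carried_map: "\<exists>\<Phi>. carried_map m k P \<Phi>"
proof (induction k)
  case 0
  have "J = {}" if "J \<subseteq> {..<m}" "card J = 0" for J :: "nat set"
    using that finite_subset[OF _ finite_lessThan] by auto
  then show ?case by (auto simp: carried_map_def)
next
  case (Suc k)
  then show ?case using carried_map_Suc by blast
qed

lemma ex_carried_map_std_simplex: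
  obtains \<Phi> where "continuous_on (std_simplex m) \<Phi>"
    "\<And>s. s \<in> std_simplex m \<Longrightarrow> \<Phi> s \<in> P (nonzero_coords s)"
proof -
  obtain \<Phi> where \<Phi>: "carried_map m m P \<Phi>"
    using ex_carried_map by blast
  have "continuous_on (std_simplex m) \<Phi>"
  proof (cases "m = 0")
    case True
    then show ?thesis by (simp add: std_simplex_def)
  next
    case False
    then have "{..<m} \<noteq> {}" by auto
    then show ?thesis
      using carried_mapD[OF \<Phi>, of "{..<m}"] face_lessThan[of m] by simp
  qed
  moreover have "\<Phi> s \<in> P (nonzero_coords s)" if s: "s \<in> std_simplex m" for s
  proof -
    have "card (nonzero_coords s) \<le> m"
      using card_mono[OF _ std_simplex_nonzero_coords(2)[OF s]] by simp
    then show ?thesis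
      using carried_mapD[OF \<Phi> std_simplex_nonzero_coords(2,3)[OF s]] std_simplex_nonzero_coords(1)[OF s]
      by blast
  qed
  ultimately show ?thesis
    using that by blast
qed
end

section \<open>A covering lemma for families of simplices\<close>

lemma eventually_uniform_margin:
  fixes g :: "'i \<Rightarrow> 'a::topological_space \<Rightarrow> real"
  assumes S: "compact S" and J: "finite J" and cont: "\<And>i. i \<in> J \<Longrightarrow> continuous_on S (g i)"
    and pos: "\<And>q. q \<in> S \<Longrightarrow> \<exists>i\<in>J. 0 < g i q"
  shows "\<forall>\<^sub>F \<epsilon> in at_right 0. \<forall>q\<in>S. \<exists>i\<in>J. \<epsilon> \<le> g i q"
proof (cases "S = {}")
  case False
  define h where "h q = (\<Sum>i\<in>J. max 0 (g i q))" for q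
  have "continuous_on S h"
    unfolding h_def by (intro continuous_on_sum continuous_on_max continuous_on_const cont)
  then obtain q0 where q0: "q0 \<in> S" "\<And>q. q \<in> S \<Longrightarrow> h q0 \<le> h q"
    using continuous_attains_inf[OF S False] by blast
  obtain i0 where i0: "i0 \<in> J" "0 < g i0 q0"
    using pos[OF q0(1)] by blast
  have "0 < h q0"
    unfolding h_def using J i0 by (intro sum_pos2[of J i0]) auto
  moreover have "0 < card J"
    using J i0(1) card_gt_0_iff by blast
  moreover have "\<exists>i\<in>J. \<epsilon> \<le> g i q" if "q \<in> S" "0 < \<epsilon>" "\<epsilon> < h q0 / card J" for \<epsilon> q
  proof (rule ccontr)
    assume "\<not> (\<exists>i\<in>J. \<epsilon> \<le> g i q)"
    then have "h q \<le> card J * \<epsilon>"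
      unfolding h_def using \<open>0 < \<epsilon>\<close> by (intro sum_bounded_above) (simp add: not_le less_imp_le)
    also have "\<dots> < h q0"
      using that(3) \<open>0 < card J\<close> by (simp add: field_simps)
    finally show False
      using q0(2)[OF \<open>q \<in> S\<close>] by simp
  qed
  ultimately show ?thesis
    unfolding eventually_at_right_field by (intro exI[of _ "h q0 / card J"]) auto
qed simp

text \<open>A Brouwer fixed point of \<open>s \<mapsto> \<sigma>(\<Phi> s) / \<Sigma>\<^sub>i \<sigma>\<^sub>i(\<Phi> s)\<close>.\<close>
lemma ex_std_simplex_point_supported_by_weights:
  fixes P :: "'a::euclidean_space set" and \<sigma> :: "nat \<Rightarrow> 'b::topological_space \<Rightarrow> real"
  assumes hom: "P homeomorphic std_simplex m" and m: "m \<ge> 1"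
    and \<Phi>: "continuous_on (std_simplex m) \<Phi>" "\<Phi> ` std_simplex m \<subseteq> Q"
    and \<sigma>: "\<And>i. i < m \<Longrightarrow> continuous_on Q (\<sigma> i)" "\<And>i q. q \<in> Q \<Longrightarrow> 0 \<le> \<sigma> i q"
      "\<And>q. q \<in> Q \<Longrightarrow> 0 < (\<Sum>i<m. \<sigma> i q)"
  obtains s where "s \<in> std_simplex m" "\<And>i. i \<in> nonzero_coords s \<Longrightarrow> 0 < \<sigma> i (\<Phi> s)"
proof -
  define F where "F s = normalize_weights m (\<lambda>i. \<sigma> i (\<Phi> s))" for s
  have "continuous_on (std_simplex m) (\<lambda>s. \<sigma> i (\<Phi> s))" if "i < m" for i
    using continuous_on_compose2[OF \<sigma>(1)[OF that] \<Phi>] .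
  moreover have "(\<Sum>i<m. \<sigma> i (\<Phi> s)) \<noteq> 0" if "s \<in> std_simplex m" for s
    using \<sigma>(3) \<Phi>(2) that by (metis image_subset_iff less_irrefl)
  ultimately have "continuous_on (std_simplex m) F"
    unfolding F_def by (rule continuous_on_normalize_weights)
  moreover have "F ` std_simplex m \<subseteq> std_simplex m"
    unfolding F_def using \<sigma>(2,3) \<Phi>(2) by (auto intro!: normalize_weights_in_std_simplex)
  ultimately obtain s where s: "s \<in> std_simplex m" "F s = s"
    using std_simplex_fixpoint[OF hom m] by blast
  show ?thesis
  proof (rule that[OF s(1)])
    fix i assume "i \<in> nonzero_coords s"
    then have "i < m" "normalize_weights m (\<lambda>i. \<sigma> i (\<Phi> s)) i \<noteq> 0"
      using s std_simplex_nonzero_coords(2)[OF s(1)] by (auto simp: F_def nonzero_coords_def)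
    then show "0 < \<sigma> i (\<Phi> s)"
      using \<sigma>(2) \<Phi>(2) s(1) by (force simp: normalize_weights_def less_le)
  qed
qed

context simplex_family
begin

lemma uniform_margin:
  fixes e :: "nat \<Rightarrow> 'a \<Rightarrow> real" and c :: "nat \<Rightarrow> real"
  assumes cont: "\<And>i. i < m \<Longrightarrow> continuous_on (P {..<m}) (e i)"
    and strict: "\<And>J q. J \<subseteq> {..<m} \<Longrightarrow> J \<noteq> {} \<Longrightarrow> q \<in> P J \<Longrightarrow> \<exists>i\<in>J. e i q < c i"
  obtains \<epsilon> where "0 < \<epsilon>"
    "\<And>J q. J \<subseteq> {..<m} \<Longrightarrow> J \<noteq> {} \<Longrightarrow> q \<in> P J \<Longrightarrow> \<exists>i\<in>J. \<epsilon> \<le> c i - e i q"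
proof -
  define \<J> where "\<J> = {J. J \<subseteq> {..<m} \<and> J \<noteq> {}}"
  have "finite \<J>"
    unfolding \<J>_def by (rule finite_subset[of _ "Pow {..<m}"]) auto
  moreover have "\<forall>\<^sub>F \<epsilon> in at_right 0. \<forall>q\<in>P J. \<exists>i\<in>J. \<epsilon> \<le> c i - e i q" if "J \<in> \<J>" for J
  proof (rule eventually_uniform_margin)
    have J: "J \<subseteq> {..<m}" "J \<noteq> {}" using that by (auto simp: \<J>_def)
    show "compact (P J)"
      by (simp add: homeomorphic_compactness[OF homeomorphic[OF J]] compact_std_simplex)
    show "finite J"
      using J(1) by (rule finite_subset) simp
    show "continuous_on (P J) (\<lambda>q. c i - e i q)" if "i \<in> J" for i
    proof -
      have "i < m" using that J(1) by blast
      then have "continuous_on (P J) (e i)"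
        using continuous_on_subset[OF cont mono[OF J(1) subset_refl]] by blast
      then show ?thesis by (intro continuous_intros)
    qed
    show "\<exists>i\<in>J. 0 < c i - e i q" if "q \<in> P J" for q
      using strict[OF J that] by simp
  qed
  ultimately have "\<forall>\<^sub>F \<epsilon> in at_right 0. \<forall>J\<in>\<J>. \<forall>q\<in>P J. \<exists>i\<in>J. \<epsilon> \<le> c i - e i q"
    by (rule eventually_ball_finite[OF _ ballI])
  then have "\<forall>\<^sub>F \<epsilon> in at_right 0. 0 < \<epsilon> \<and> (\<forall>J\<in>\<J>. \<forall>q\<in>P J. \<exists>i\<in>J. \<epsilon> \<le> c i - e i q)"
    by (rule eventually_conj[OF eventually_at_right_less])
  then obtain \<epsilon> where "0 < \<epsilon>" "\<forall>J\<in>\<J>. \<forall>q\<in>P J. \<exists>i\<in>J. \<epsilon> \<le> c i - e i q"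
    using eventually_happens'[OF trivial_limit_at_right_real] by blast
  then show ?thesis
    using that unfolding \<J>_def by blast
qed

lemma KKM:
  fixes e :: "nat \<Rightarrow> 'a \<Rightarrow> real" and c :: "nat \<Rightarrow> real"
  assumes m: "m \<ge> 1"
    and cont: "\<And>i. i < m \<Longrightarrow> continuous_on (P {..<m}) (e i)"
    and cover: "\<And>q. q \<in> P {..<m} \<Longrightarrow> \<exists>i<m. c i \<le> e i q"
  obtains J q where "J \<subseteq> {..<m}" "J \<noteq> {}" "q \<in> P J" "\<And>i. i \<in> J \<Longrightarrow> c i \<le> e i q"
proof (rule ccontr)
  note found = that
  assume "\<not> thesis"
  have "\<exists>i\<in>J. e i q < c i" if "J \<subseteq> {..<m}" "J \<noteq> {}" "q \<in> P J" for J q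
    using found[OF that] \<open>\<not> thesis\<close> not_le by blast
  from uniform_margin[OF cont this] obtain \<epsilon> where \<epsilon>: "0 < \<epsilon>"
    and margin: "\<And>J q. J \<subseteq> {..<m} \<Longrightarrow> J \<noteq> {} \<Longrightarrow> q \<in> P J \<Longrightarrow> \<exists>i\<in>J. \<epsilon> \<le> c i - e i q"
    by blast
  define \<sigma> where "\<sigma> i q = max 0 (e i q - c i + \<epsilon>)" for i q
  obtain \<Phi> where \<Phi>: "continuous_on (std_simplex m) \<Phi>" "\<And>s. s \<in> std_simplex m \<Longrightarrow> \<Phi> s \<in> P (nonzero_coords s)"
    using ex_carried_map_std_simplex by blast
  have "\<Phi> s \<in> P {..<m}" if "s \<in> std_simplex m" for s
    using \<Phi>(2)[OF that] mono[OF std_simplex_nonzero_coords(2)[OF that] subset_refl] by blast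
  then have \<Phi>_into: "\<Phi> ` std_simplex m \<subseteq> P {..<m}"
    by blast
  have pos: "(\<Sum>i<m. \<sigma> i q) > 0" if q: "q \<in> P {..<m}" for q
  proof -
    obtain i where "i < m" "c i \<le> e i q" using cover[OF q] by blast
    then show ?thesis
      using \<epsilon> by (intro sum_pos2[of _ i]) (auto simp: \<sigma>_def)
  qed
  have cont_\<sigma>: "continuous_on (P {..<m}) (\<sigma> i)" if "i < m" for i
    unfolding \<sigma>_def by (intro continuous_intros cont that)
  have nonneg: "0 \<le> \<sigma> i q" for i q
    by (simp add: \<sigma>_def)
  have "P {..<m} homeomorphic std_simplex m"
    using homeomorphic[of "{..<m}"] m by (simp add: lessThan_empty_iff)
  from ex_std_simplex_point_supported_by_weights[OF this m \<Phi>(1) \<Phi>_into cont_\<sigma> nonneg pos]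
  obtain s where s: "s \<in> std_simplex m" "\<And>i. i \<in> nonzero_coords s \<Longrightarrow> 0 < \<sigma> i (\<Phi> s)"
    by blast
  obtain i where "i \<in> nonzero_coords s" "\<epsilon> \<le> c i - e i (\<Phi> s)"
    using margin[OF std_simplex_nonzero_coords(2,3)[OF s(1)] \<Phi>(2)[OF s(1)]] by blast
  then show False
    using s(2)[of i] by (simp add: \<sigma>_def)
qed

end

lemma simple_problem_simplex_family:
  assumes simple: "simple_problem X fs" and e: "bij_betw e {..<m} fs"
  shows "simplex_family m (\<lambda>J. pareto_set X (e ` J))"
proof
  fix J assume J: "J \<subseteq> {..<m}"
  then have "e ` J \<subseteq> fs" "card (e ` J) = card J"
    using e by (auto simp: bij_betw_def card_image inj_on_subset)
  then show "pareto_set X (e ` J) homeomorphic std_simplex (card J)"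
    using simple_problem_homeomorphic[OF simple] by metis
next
  fix J K assume "J \<subseteq> K" "K \<subseteq> {..<m}"
  then have "e ` J \<subseteq> fs"
    using e by (auto simp: bij_betw_def)
  then show "pareto_set X (e ` J) \<subseteq> pareto_set X (e ` K)"
    using simple_problem_inj_on_eval_map[OF simple] pareto_set_mono \<open>J \<subseteq> K\<close> by (metis image_mono)
qed

lemma simple_problem_weak_pareto_subset_pareto:
  assumes fin: "finite fs" and simple: "simple_problem X fs"
  shows "weak_pareto_set X fs \<subseteq> pareto_set X fs"
proof
  fix x assume "x \<in> weak_pareto_set X fs"
  then have "x \<in> X" and weak: "\<And>q. q \<in> X \<Longrightarrow> \<exists>f\<in>fs. f x \<le> f q"
    by (auto simp: weak_pareto_set_def)
  then have "fs \<noteq> {}" by blast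
  define m where "m = card fs"
  obtain e where e: "bij_betw e {..<m} fs"
    using ex_bij_betw_nat_finite[OF fin] by (auto simp: m_def atLeast0LessThan)
  then have fs: "e ` {..<m} = fs" by (simp add: bij_betw_def)
  interpret simplex_family m "\<lambda>J. pareto_set X (e ` J)"
    using simple e by (rule simple_problem_simplex_family)
  obtain J q where J: "J \<subseteq> {..<m}" "q \<in> pareto_set X (e ` J)" "\<And>i. i \<in> J \<Longrightarrow> e i x \<le> e i q"
  proof (rule KKM)
    show "1 \<le> m"
      using fin \<open>fs \<noteq> {}\<close> by (simp add: m_def Suc_le_eq card_gt_0_iff)
    show "continuous_on (pareto_set X (e ` {..<m})) (e i)" if "i < m" for i
      using simple_problem_continuous_on[OF simple subset_refl] fs that by blast
    show "\<exists>i<m. e i x \<le> e i q" if "q \<in> pareto_set X (e ` {..<m})" for q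
      using weak[of q] that pareto_set_subset fs by fastforce
  qed blast
  then have "x \<in> pareto_set X (e ` J)"
    using pareto_set_weakly_below(1)[OF J(2) \<open>x \<in> X\<close>] by blast
  then show "x \<in> pareto_set X fs"
    using mono[OF J(1) subset_refl] fs by blast
qed

theorem proposition2:
  fixes X :: "(real^'n) set" and fs :: "((real^'n) \<Rightarrow> real) set"
  assumes "finite fs"
    and "simple_problem X fs"
  shows "weak_pareto_set X fs = pareto_set X fs"
  using simple_problem_weak_pareto_subset_pareto[OF assms] pareto_subset_weak_pareto by blast

end
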